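(* Let $\mathcal{F}$ be a TBF algorithm, let $I$ be a Tanner graph, and let $S$ be a trapping set of $\mathcal{F}$ with inducing set $I$ (i.e. $S\in\mathscr{E}_I^{\mathrm{r}}(\mathcal{F})$). Then there exists at least one induced subgraph $J$ of $S$ (induced on a set of variable nodes of $S$) such that: (1) $J$ is isomorphic to $I$; (2) $\mathcal{F}$ fails on the subgraph $J$ of $S$; (3) when $\mathcal{F}$ is run on $S$ with $V(J)$ as the set of initially corrupt variable nodes, for every variable node $v\in V(S)$ there exists an integer $l$ with $0\le l\le l^{\mathrm{m}}_{\mathcal{F}}$ such that $w^l_v\in\{1_{\mathrm s},1_{\mathrm w}\}$.
   Context: Tanner graphs: a Tanner graph $G$ is a bipartite graph with variable nodes $V(G)$, check nodes $C(G)$ and edges $E(G)$; every variable node has degree $d_{\mathrm v}$ (fixed). A subgraph $U$ of $G$ has $V(U)\subset V(G)$, $C(U)\subset C(G)$, $E(U)\subset E(G)$; $G$ also "contains" any graph isomorphic to a subgraph. The induced subgraph on $V_{\mathrm s}\subset V(G)$ has variable nodes $V_{\mathrm s}$, all check nodes adjacent to $V_{\mathrm s}$, and all edges of $G$ incident to $V_{\mathrm s}$. Decoding setting: the all-zero codeword is sent over the binary symmetric channel; $\mathbf y$ is the received vector; $\hat{\mathbf x}^l$ is the decision vector after iteration $l$ (with $\hat{\mathbf x}^0=\mathbf y$), and $\mathbf s^l=\hat{\mathbf x}^lH^{\mathrm T}$ its syndrome ($H$ the biadjacency matrix). A variable node $v$ is initially corrupt if $y_v=1$. TBF algorithm $\mathcal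 F=(f,l^{\mathrm m}_{\mathcal F},\Delta_{\mathrm v},\Delta_{\mathrm c})$: variable node states lie in $\mathcal A_{\mathrm v}=\{0_{\mathrm s},0_{\mathrm w},1_{\mathrm w},1_{\mathrm s}\}$ (state $a_{\mathrm s}$ or $a_{\mathrm w}$ means decision bit $a$), check node states in $\mathcal A_{\mathrm c}=\{0_{\mathrm p},0_{\mathrm n},1_{\mathrm p},1_{\mathrm n}\}$. Initialization: $w^0_v=\Delta_{\mathrm v}(y_v)$ with $\Delta_{\mathrm v}(0)\in\{0_{\mathrm s},0_{\mathrm w}\}$, $\Delta_{\mathrm v}(1)\in\{1_{\mathrm s},1_{\mathrm w}\}$; $z^1_c=\Delta_{\mathrm c}(s^0_c)$ with $\Delta_{\mathrm c}(0)\in\{0_{\mathrm p},0_{\mathrm n}\}$, $\Delta_{\mathrm c}(1)\in\{1_{\mathrm p},1_{\mathrm n}\}$. For $l=1,2,\dots$, while the syndrome is nonzero and $l<l^{\mathrm m}_{\mathcal F}$: every variable node updates $w^l_v=f(w^{l-1}_v,\chi^l_{0_{\mathrm p}}(v),\chi^l_{0_{\mathrm n}}(v),\chi^l_{1_{\mathrm p}}(v),\chi^l_{1_{\mathrm n}}(v))$, where $\chi^l_a(v)$ is the number of neighboring check nodes $c$ with $z^l_c=a$; then every check node updates $z^{l+1}_c=\Phi(s^{l-1}_c,s^l_c)$ with $\Phi(0,0)=0_{\mathrm p},\Phi(0,1)=1_{\mathrm n},\Phi(1,0)=0_{\mathrm n},\Phi(1,1)=1_{\mathrm p}$. Here $f:\mathcal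 A_{\mathrm v}\times\Xi_{d_{\mathrm v}}\to\mathcal A_{\mathrm v}$, where $\Xi_{d_{\mathrm v}}$ is the set of 4-tuples of nonnegative integers summing to $d_{\mathrm v}$; $f$ is symmetric with respect to $0$ and $1$ and every variable-node state is reachable from every other. Failure: for a TBF algorithm $\mathcal F$, a Tanner graph $G$ and a set $V_{\mathrm e}$ of initially corrupt variable nodes with induced subgraph $I$, "$\mathcal F$ fails on the subgraph $I$ of $G$" means $\mathcal F$ run on $G$ with initially corrupt set $V_{\mathrm e}$ does not converge (does not reach zero syndrome) within $l^{\mathrm m}_{\mathcal F}$ iterations. Trapping sets: for a Tanner graph $I$, $\mathscr E_I(\mathcal F)$ is the set of Tanner graphs $S$ containing a subgraph $J$ isomorphic to $I$ such that $\mathcal F$ fails on $J$ of $S$. $S_1\in\mathscr E_I(\mathcal F)$, with $\mathcal F$ failing on its subgraph $J_1$, belongs to $\mathscr E_I^{\mathrm r}(\mathcal F)$ if there is no $S_2\in\mathscr E_I(\mathcal F)$ with a subgraph $J_2$ such that $\mathcal F$ fails on $J_2$ of $S_2$ and there is an isomorphism between $S_2$ and a proper subgraph of $S_1$ mapping $V(J_2)$ into $V(J_1)$. Elements of $\mathscr E_I^{\mathrm r}(\mathcal F)$ are trapping sets of $\mathcal F$ with inducing set $I$; $\mathscr E_I^{\mathrm r}(\mathcal F)$ is the trapping set profile with inducing set $I$. *)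

theory Defs
  imports Main
begin

text \<open>Nodes are labelled by natural numbers; variable nodes and check nodes live in
  separate sets, an edge is a pair (variable node, check node).\<close>

record tgraph =
  vn :: "nat set"
  cn :: "nat set"
  ed :: "(nat \<times> nat) set"

definition bigraph :: "tgraph \<Rightarrow> bool" where
  "bigraph G \<longleftrightarrow> finite (vn G) \<and> finite (cn G) \<and> ed G \<subseteq> vn G \<times> cn G"

definition tanner :: "nat \<Rightarrow> tgraph \<Rightarrow> bool" where
  "tanner dv G \<longleftrightarrow> bigraph G \<and> (\<forall>v\<in>vn G. card {c. (v, c) \<in> ed G} = dv)"

definition subgraph :: "tgraph \<Rightarrow> tgraph \<Rightarrow> bool" where
  "subgraph U G \<longleftrightarrow> bigraph U \<and> vn U \<subseteq> vn G \<and> cn U \<subseteq> cn G \<and> ed U \<subseteq> ed G"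

definition graph_iso :: "(nat \<Rightarrow> nat) \<Rightarrow> (nat \<Rightarrow> nat) \<Rightarrow> tgraph \<Rightarrow> tgraph \<Rightarrow> bool" where
  "graph_iso pv pc H K \<longleftrightarrow> bij_betw pv (vn H) (vn K) \<and> bij_betw pc (cn H) (cn K) \<and>
     (\<forall>v\<in>vn H. \<forall>c\<in>cn H. (v, c) \<in> ed H \<longleftrightarrow> (pv v, pc c) \<in> ed K)"

definition isomorphic :: "tgraph \<Rightarrow> tgraph \<Rightarrow> bool" where
  "isomorphic H K \<longleftrightarrow> (\<exists>pv pc. graph_iso pv pc H K)"

definition induced :: "tgraph \<Rightarrow> nat set \<Rightarrow> tgraph" where
  "induced G Vs = \<lparr>vn = Vs, cn = {c. \<exists>v\<in>Vs. (v, c) \<in> ed G},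
                   ed = {(v, c) \<in> ed G. v \<in> Vs}\<rparr>"

datatype vstate = V0s | V0w | V1w | V1s
datatype cstate = C0p | C0n | C1p | C1n

fun vbit :: "vstate \<Rightarrow> bool" where
  "vbit V0s = False" | "vbit V0w = False" | "vbit V1w = True" | "vbit V1s = True"

fun vflip :: "vstate \<Rightarrow> vstate" where
  "vflip V0s = V1s" | "vflip V0w = V1w" | "vflip V1w = V0w" | "vflip V1s = V0s"

fun Phi :: "bool \<Rightarrow> bool \<Rightarrow> cstate" where
  "Phi False False = C0p" | "Phi False True = C1n" | "Phi True False = C0n" | "Phi True True = C1p"

text \<open>A TBF algorithm (f, lmax, Delta_v, Delta_c); argument order of the 4-tuple:
  (chi_0p, chi_0n, chi_1p, chi_1n).  Bits: False = 0, True = 1.\<close>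
record tbf =
  tbf_f :: "vstate \<Rightarrow> nat \<times> nat \<times> nat \<times> nat \<Rightarrow> vstate"
  tbf_lmax :: nat
  tbf_dv :: "bool \<Rightarrow> vstate"
  tbf_dc :: "bool \<Rightarrow> cstate"

definition Xi :: "nat \<Rightarrow> (nat \<times> nat \<times> nat \<times> nat) set" where
  "Xi dv = {(a, b, c, d). a + b + c + d = dv}"

definition is_tbf :: "nat \<Rightarrow> tbf \<Rightarrow> bool" where
  "is_tbf dv F \<longleftrightarrow>
     tbf_dv F False \<in> {V0s, V0w} \<and> tbf_dv F True \<in> {V1s, V1w} \<and>
     tbf_dc F False \<in> {C0p, C0n} \<and> tbf_dc F True \<in> {C1p, C1n} \<and>
     (\<forall>w. \<forall>x\<in>Xi dv. tbf_f F (vflip w) x = vflip (tbf_f F w x)) \<and>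
     (\<forall>a b. (a, b) \<in> {(w, tbf_f F w x) | w x. x \<in> Xi dv}\<^sup>*)"

definition syndrome :: "tgraph \<Rightarrow> (nat \<Rightarrow> vstate) \<Rightarrow> nat \<Rightarrow> bool" where
  "syndrome G w c = odd (card {v. (v, c) \<in> ed G \<and> vbit (w v)})"

definition syn_nonzero :: "tgraph \<Rightarrow> (nat \<Rightarrow> vstate) \<Rightarrow> bool" where
  "syn_nonzero G w \<longleftrightarrow> (\<exists>c\<in>cn G. syndrome G w c)"

definition chi :: "tgraph \<Rightarrow> (nat \<Rightarrow> cstate) \<Rightarrow> nat \<Rightarrow> cstate \<Rightarrow> nat" where
  "chi G z v a = card {c. (v, c) \<in> ed G \<and> z c = a}"

definition tbf_step :: "tbf \<Rightarrow> tgraph \<Rightarrow> nat \<Rightarrow> (nat \<Rightarrow> vstate) \<Rightarrow> (nat \<Rightarrow> cstate) \<Rightarrow> nat \<Rightarrow> vstate" where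
  "tbf_step F G l w z =
     (if syn_nonzero G w \<and> l < tbf_lmax F
      then (\<lambda>v. if v \<in> vn G
                 then tbf_f F (w v) (chi G z v C0p, chi G z v C0n, chi G z v C1p, chi G z v C1n)
                 else w v)
      else w)"

text \<open>tbf_w F G Ve l v is the state w^l_v of variable node v after iteration l, when F is
  run on G with initially corrupt set Ve (frozen after the decoder halts).\<close>
fun tbf_w :: "tbf \<Rightarrow> tgraph \<Rightarrow> nat set \<Rightarrow> nat \<Rightarrow> nat \<Rightarrow> vstate" where
  "tbf_w F G Ve 0 = (\<lambda>v. tbf_dv F (v \<in> Ve))"
| "tbf_w F G Ve (Suc 0) =
     tbf_step F G (Suc 0) (tbf_w F G Ve 0) (\<lambda>c. tbf_dc F (syndrome G (tbf_w F G Ve 0) c))"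
| "tbf_w F G Ve (Suc (Suc n)) =
     tbf_step F G (Suc (Suc n)) (tbf_w F G Ve (Suc n))
       (\<lambda>c. Phi (syndrome G (tbf_w F G Ve n) c) (syndrome G (tbf_w F G Ve (Suc n)) c))"

definition tbf_fails :: "tbf \<Rightarrow> tgraph \<Rightarrow> nat set \<Rightarrow> bool" where
  "tbf_fails F G Ve \<longleftrightarrow> (\<forall>l \<le> tbf_lmax F. syn_nonzero G (tbf_w F G Ve l))"

definition fails_on :: "tbf \<Rightarrow> tgraph \<Rightarrow> tgraph \<Rightarrow> bool" where
  "fails_on F G J \<longleftrightarrow> vn J \<subseteq> vn G \<and> J = induced G (vn J) \<and> tbf_fails F G (vn J)"

definition E_set :: "nat \<Rightarrow> tbf \<Rightarrow> tgraph \<Rightarrow> tgraph set" where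
  "E_set dv F I = {S. tanner dv S \<and> (\<exists>J. subgraph J S \<and> isomorphic J I \<and> fails_on F S J)}"

definition E_r :: "nat \<Rightarrow> tbf \<Rightarrow> tgraph \<Rightarrow> tgraph set" where
  "E_r dv F I = {S1. S1 \<in> E_set dv F I \<and>
     (\<exists>J1. subgraph J1 S1 \<and> isomorphic J1 I \<and> fails_on F S1 J1 \<and>
        \<not> (\<exists>S2 J2 U pv pc. S2 \<in> E_set dv F I \<and> subgraph J2 S2 \<and> isomorphic J2 I \<and>
              fails_on F S2 J2 \<and> subgraph U S1 \<and> U \<noteq> S1 \<and>
              graph_iso pv pc S2 U \<and> pv ` vn J2 \<subseteq> vn J1))}"

end

theory Submission
  imports Defs
begin

(* Let S be a trapping set with witnessing failing subgraph J, induced on Vs.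
   Suppose some variable node v of S never takes a 1-state during the run of F on S with
   initially corrupt set Vs.  Deleting v (and its edges) from S gives a proper subgraph U.
   Since v contributes nothing to any syndrome, the run of F on U coincides with the run on
   S at every remaining node; hence F still fails on J in U, so U with J lies in E_I(F),
   embedded into S by the identity.  This contradicts the minimality required of S in
   E_I^r(F). *)

definition delete_vnode :: "tgraph \<Rightarrow> nat \<Rightarrow> tgraph" where
  "delete_vnode S v = \<lparr>vn = vn S - {v}, cn = cn S, ed = {(x, c) \<in> ed S. x \<noteq> v}\<rparr>"

lemma vbit_iff_one_state: "vbit s \<longleftrightarrow> s \<in> {V1s, V1w}"
  by (cases s) auto

lemma syndrome_delete_vnode:
  assumes "\<forall>x. x \<noteq> v \<longrightarrow> w1 x = w2 x" and "\<not> vbit (w2 v)"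
  shows "syndrome (delete_vnode S v) w1 c = syndrome S w2 c"
proof -
  have "{x. (x, c) \<in> ed (delete_vnode S v) \<and> vbit (w1 x)} = {x. (x, c) \<in> ed S \<and> vbit (w2 x)}"
    using assms by (auto simp: delete_vnode_def)
  then show ?thesis by (simp add: syndrome_def)
qed

lemma syn_nonzero_delete_vnode:
  assumes "\<forall>x. x \<noteq> v \<longrightarrow> w1 x = w2 x" and "\<not> vbit (w2 v)"
  shows "syn_nonzero (delete_vnode S v) w1 \<longleftrightarrow> syn_nonzero S w2"
  using syndrome_delete_vnode[OF assms] by (simp add: syn_nonzero_def delete_vnode_def)

lemma chi_delete_vnode: "x \<noteq> v \<Longrightarrow> chi (delete_vnode S v) z x a = chi S z x a"
  by (simp add: chi_def delete_vnode_def)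

lemma tbf_step_delete_vnode:
  assumes "\<forall>x. x \<noteq> v \<longrightarrow> w1 x = w2 x" and "\<not> vbit (w2 v)" and "x \<noteq> v"
  shows "tbf_step F (delete_vnode S v) l w1 z x = tbf_step F S l w2 z x"
  using syn_nonzero_delete_vnode[OF assms(1,2), of S] assms chi_delete_vnode[OF assms(3)]
  by (simp add: tbf_step_def delete_vnode_def)

text \<open>The
  induction looks back two iterations, as does the recursion defining tbf_w.\<close>
lemma tbf_w_delete_vnode:
  assumes never_one: "\<forall>l \<le> tbf_lmax F. \<not> vbit (tbf_w F S Ve l v)"
  shows "l \<le> tbf_lmax F \<Longrightarrow> \<forall>x. x \<noteq> v \<longrightarrow> tbf_w F (delete_vnode S v) Ve l x = tbf_w F S Ve l x"
proof (induction l rule: induct_nat_012)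
  case 0
  then show ?case by simp
next
  case 1
  have agree0: "\<forall>x. x \<noteq> v \<longrightarrow> tbf_w F (delete_vnode S v) Ve 0 x = tbf_w F S Ve 0 x"
    by simp
  have zero0: "\<not> vbit (tbf_w F S Ve 0 v)" using never_one by blast
  show ?case
    using tbf_step_delete_vnode[OF agree0 zero0] syndrome_delete_vnode[OF agree0 zero0] by simp
next
  case (ge2 n)
  then have agree: "\<forall>x. x \<noteq> v \<longrightarrow> tbf_w F (delete_vnode S v) Ve n x = tbf_w F S Ve n x"
      "\<forall>x. x \<noteq> v \<longrightarrow> tbf_w F (delete_vnode S v) Ve (Suc n) x = tbf_w F S Ve (Suc n) x"
    by simp_all
  have zero: "\<not> vbit (tbf_w F S Ve n v)" "\<not> vbit (tbf_w F S Ve (Suc n) v)"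
    using never_one ge2.prems by simp_all
  show ?case
    using tbf_step_delete_vnode[OF agree(2) zero(2)]
      syndrome_delete_vnode[OF agree(1) zero(1)] syndrome_delete_vnode[OF agree(2) zero(2)]
    by simp
qed

lemma bigraph_delete_vnode: "bigraph S \<Longrightarrow> bigraph (delete_vnode S v)"
  by (auto simp: bigraph_def delete_vnode_def)

text \<open>Remaining variable nodes keep all their edges, hence their degree.\<close>
lemma tanner_delete_vnode:
  assumes "tanner dv S"
  shows "tanner dv (delete_vnode S v)"
proof -
  have "bigraph (delete_vnode S v)"
    using assms bigraph_delete_vnode by (simp add: tanner_def)
  then show ?thesis using assms by (auto simp: tanner_def delete_vnode_def)
qed

lemma subgraph_delete_vnode: "bigraph S \<Longrightarrow> subgraph (delete_vnode S v) S"
  using bigraph_delete_vnode by (auto simp: subgraph_def delete_vnode_def)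

lemma delete_vnode_proper: "v \<in> vn S \<Longrightarrow> delete_vnode S v \<noteq> S"
proof
  assume "v \<in> vn S" and "delete_vnode S v = S"
  then have "v \<in> vn (delete_vnode S v)" by simp
  then show False by (simp add: delete_vnode_def)
qed

lemma induced_delete_vnode: "v \<notin> Vs \<Longrightarrow> induced (delete_vnode S v) Vs = induced S Vs"
  by (auto simp: induced_def delete_vnode_def)

lemma subgraph_induced_delete_vnode:
  assumes "subgraph J S" and "J = induced S (vn J)" and "v \<notin> vn J"
  shows "subgraph J (delete_vnode S v)"
proof -
  have "ed J = ed (induced S (vn J))" using assms(2) by simp
  then have "ed J = {(x, c) \<in> ed S. x \<in> vn J}" by (simp add: induced_def)
  then show ?thesis using assms(1,3) by (auto simp: subgraph_def delete_vnode_def)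
qed

lemma fails_on_delete_vnode:
  assumes fails: "fails_on F S J" and "v \<notin> vn J"
    and never_one: "\<forall>l \<le> tbf_lmax F. \<not> vbit (tbf_w F S (vn J) l v)"
  shows "fails_on F (delete_vnode S v) J"
proof -
  have "syn_nonzero (delete_vnode S v) (tbf_w F (delete_vnode S v) (vn J) l)"
    if l: "l \<le> tbf_lmax F" for l
  proof -
    have "syn_nonzero S (tbf_w F S (vn J) l)"
      using fails l by (simp add: fails_on_def tbf_fails_def)
    then show ?thesis
      using syn_nonzero_delete_vnode[OF tbf_w_delete_vnode[OF never_one l]] never_one l by simp
  qed
  then have "tbf_fails F (delete_vnode S v) (vn J)" by (simp add: tbf_fails_def)
  then show ?thesis
    using fails \<open>v \<notin> vn J\<close> induced_delete_vnode[of v "vn J" S]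
    by (auto simp: fails_on_def delete_vnode_def)
qed

text \<open>Initially corrupt nodes start in a 1-state, so a node that is never in a
  1-state lies outside the inducing set.\<close>
lemma never_one_not_initially_corrupt:
  assumes "is_tbf dv F" and "\<forall>l \<le> tbf_lmax F. \<not> vbit (tbf_w F S Ve l v)"
  shows "v \<notin> Ve"
proof
  assume "v \<in> Ve"
  then have "tbf_w F S Ve 0 v = tbf_dv F True" by simp
  then show False using assms by (auto simp: is_tbf_def)
qed

lemma delete_never_one_vnode_in_E_set:
  assumes "is_tbf dv F" and S_tanner: "tanner dv S"
    and J: "subgraph J S" "isomorphic J I" "fails_on F S J"
    and never_one: "\<forall>l \<le> tbf_lmax F. \<not> vbit (tbf_w F S (vn J) l v)"
  shows "delete_vnode S v \<in> E_set dv F I" "subgraph J (delete_vnode S v)"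
    "fails_on F (delete_vnode S v) J"
proof -
  have "v \<notin> vn J" using never_one_not_initially_corrupt[OF assms(1) never_one] .
  moreover have "J = induced S (vn J)" using J(3) by (simp add: fails_on_def)
  ultimately show J_in_U: "subgraph J (delete_vnode S v)" "fails_on F (delete_vnode S v) J"
    using subgraph_induced_delete_vnode[OF J(1)] fails_on_delete_vnode[OF J(3) _ never_one]
    by auto
  then show "delete_vnode S v \<in> E_set dv F I"
    using tanner_delete_vnode[OF S_tanner] J(2) by (auto simp: E_set_def)
qed

theorem proposition1:
  fixes dv :: nat and F :: tbf and I S :: tgraph
  assumes "is_tbf dv F"
    and "tanner dv I"
    and "S \<in> E_r dv F I"
  shows "\<exists>Vs \<subseteq> vn S.
           isomorphic (induced S Vs) I \<and>
           fails_on F S (induced S Vs) \<and>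
           (\<forall>v \<in> vn S. \<exists>l \<le> tbf_lmax F. tbf_w F S Vs l v \<in> {V1s, V1w})"
proof -
  from assms(3) obtain J where S_E: "S \<in> E_set dv F I" and J: "subgraph J S" "isomorphic J I"
    "fails_on F S J" and minimal: "\<not> (\<exists>S2 J2 U pv pc. S2 \<in> E_set dv F I \<and> subgraph J2 S2 \<and>
      isomorphic J2 I \<and> fails_on F S2 J2 \<and> subgraph U S \<and> U \<noteq> S \<and>
      graph_iso pv pc S2 U \<and> pv ` vn J2 \<subseteq> vn J)"
    unfolding E_r_def by blast
  have "\<exists>l \<le> tbf_lmax F. vbit (tbf_w F S (vn J) l v)" if v: "v \<in> vn S" for v
  proof (rule ccontr)
    let ?U = "delete_vnode S v"
    assume "\<not> ?thesis"
    then have never_one: "\<forall>l \<le> tbf_lmax F. \<not> vbit (tbf_w F S (vn J) l v)" by blast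
    have S_tanner: "tanner dv S" using S_E by (simp add: E_set_def)
    note U = delete_never_one_vnode_in_E_set[OF assms(1) S_tanner J never_one]
    moreover have "subgraph ?U S" "?U \<noteq> S"
      using subgraph_delete_vnode S_tanner delete_vnode_proper[OF v] by (auto simp: tanner_def)
    (* U is a proper subgraph of S carried onto itself by the identity: minimality is violated *)
    moreover have "graph_iso id id ?U ?U" by (simp add: graph_iso_def)
    moreover have "id ` vn J \<subseteq> vn J" by simp
    ultimately show False using minimal U J(2) by blast
  qed
  then show ?thesis
    using J by (intro exI[of _ "vn J"]) (auto simp: fails_on_def vbit_iff_one_state)
qed

end
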